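(* Let $m$ and $k$ be odd integers with $k\ge3$ and $m\ge 2k+3$. Then $\mathrm{msum}(mk,k)\ge2$.
   Context: For positive integers $n>k$, let $S_n$ be the set of permutations $\pi=(\pi_1,\dots,\pi_n)$ of $1,\dots,n$, with cyclic indexing $\pi_{n+i}=\pi_i$, and $s_i=\sum_{j=0}^{k-1}\pi_{i+j}$ for $i=1,\dots,n$. Define $\mathrm{msum}(\pi,k)=\max_{1\le i\le n}s_i-\frac{k(n+1)}{2}$ and $\mathrm{msum}(n,k)=\min_{\pi\in S_n}\mathrm{msum}(\pi,k)$. *)

theory Defs
  imports Main "HOL-Combinatorics.Multiset_Permutations"
begin

(* A permutation pi = (pi_1,...,pi_n) of 1..n is a list xs with xs ! (i-1) = pi_i.
   Cyclic window sum s_i = sum_{j=0}^{k-1} pi_{i+j}, with i = i0+1, i0 in {0..<n}. *)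
definition window_sum :: "nat list \<Rightarrow> nat \<Rightarrow> nat \<Rightarrow> nat" where
  "window_sum xs k i0 = (\<Sum>j<k. xs ! ((i0 + j) mod length xs))"

definition msum_perm :: "nat list \<Rightarrow> nat \<Rightarrow> real" where
  "msum_perm xs k =
     real (Max {window_sum xs k i0 | i0. i0 < length xs})
     - real k * (real (length xs) + 1) / 2"

definition msum :: "nat \<Rightarrow> nat \<Rightarrow> real" where
  "msum n k = Min ((\<lambda>xs. msum_perm xs k) ` permutations_of_set {1..n})"

end

(* Suppose every cyclic window sum s_i of a permutation pi of 1..n, n = mk odd, is at most
   A + 1, where A = k(n+1)/2 is their mean, and let d_i = A + 1 - s_i >= 0 be the slack of
   window i. The d_i sum to n, and pi_(i+k) - pi_i = d_i - d_(i+1), so two consecutive slacks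
   never vanish together. Along a residue class r, r+k, ..., r+(m-1)k the values of pi form a
   cyclic sequence of m distinct integers; counting upcrossings level by level shows that its
   total variation is at least 2m - 4 plus its number of turns, while the slack identity bounds
   it by 2m minus twice the number of positions where both adjacent slacks are positive.
   Summing over the k classes gives turns + 2 * double slacks <= 4k. Between double slacks the
   zero pattern of d alternates, so, k being odd, a position q without double slack among
   q, ..., q+k is a turn; hence n - turns <= (k+1) * double slacks. Together n <= 2k^2 + 2k,
   that is m <= 2k + 2. *)

theory Submission
  imports Defs
begin

lemma card_filter_lessThan_eq_sum:
  fixes n :: nat
  shows "card {q. q < n \<and> P q} = (\<Sum>q<n. of_bool (P q))"
  by (simp add: lessThan_def Collect_conj_eq)

lemma periodic_mod:
  fixes y :: "nat \<Rightarrow> 'a"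
  assumes periodic: "\<And>j. y (j + m) = y j"
  shows "y j = y (j mod m)"
proof -
  have "y (i + c * m) = y i" for i c
    by (induction c) (simp_all add: periodic add.assoc[symmetric] add.commute[of m])
  from this[of "j mod m" "j div m"] show ?thesis by simp
qed

lemma sum_shift_periodic:
  fixes f :: "nat \<Rightarrow> 'a::cancel_comm_monoid_add"
  assumes periodic: "\<And>i. f (i + n) = f i"
  shows "(\<Sum>i<n. f (i + t)) = (\<Sum>i<n. f i)"
proof (induction t)
  case (Suc t)
  define g where "g i = f (i + t)" for i
  have "g 0 + (\<Sum>i<n. g (Suc i)) = (\<Sum>i<n. g i) + g 0"
    using sum.lessThan_Suc_shift[of g n] periodic[of t] by (simp add: g_def add.commute)
  then show ?case using Suc by (simp add: g_def add.commute)
qed simp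

lemma sum_lessThan_mult_split:
  fixes f :: "nat \<Rightarrow> 'a::comm_monoid_add"
  shows "(\<Sum>q<m * k. f q) = (\<Sum>j<m. \<Sum>r<k. f (r + j * k))"
proof -
  have "sum f {j * k..<j * k + k} = (\<Sum>r<k. f (r + j * k))" for j
    using sum.shift_bounds_nat_ivl[of f 0 "j * k" k] by (simp add: atLeast0LessThan add.commute)
  then show ?thesis using sum.nat_group[of f k m] by simp
qed

lemma card_filter_lessThan_mult_split:
  fixes m k :: nat
  shows "card {q. q < m * k \<and> P q} = (\<Sum>r<k. card {j. j < m \<and> P (r + j * k)})"
proof -
  have "card {q. q < m * k \<and> P q} = (\<Sum>j<m. \<Sum>r<k. of_bool (P (r + j * k)))"
    unfolding card_filter_lessThan_eq_sum by (rule sum_lessThan_mult_split)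
  also have "\<dots> = (\<Sum>r<k. \<Sum>j<m. of_bool (P (r + j * k)))"
    by (rule sum.swap)
  finally show ?thesis by (simp only: card_filter_lessThan_eq_sum)
qed

lemma exists_upcrossing:
  fixes y :: "nat \<Rightarrow> 'a::linorder"
  assumes "y a \<le> v" "v < y (a + t)"
  shows "\<exists>s<t. y (a + s) \<le> v \<and> v < y (Suc (a + s))"
  using assms(2)
proof (induction t)
  case 0
  with assms(1) show ?case by simp
next
  case (Suc t)
  show ?case
  proof (cases "v < y (a + t)")
    case True
    with Suc.IH show ?thesis using less_SucI by blast
  next
    case False
    with Suc.prems show ?thesis by (intro exI[of _ t]) auto
  qed
qed

definition upcrossings :: "(nat \<Rightarrow> 'a::linorder) \<Rightarrow> nat \<Rightarrow> 'a \<Rightarrow> nat set" where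
  "upcrossings y m v = {j. j < m \<and> y j \<le> v \<and> v < y (Suc j)}"

lemma periodic_upcrossing:
  fixes y :: "nat \<Rightarrow> 'a::linorder"
  assumes periodic: "\<And>j. y (j + m) = y j" and "0 < m"
    and "y b \<le> v" "v < y (b + t)"
  obtains s where "s < t" "(b + s) mod m \<in> upcrossings y m v"
proof -
  obtain s where s: "s < t" "y (b + s) \<le> v" "v < y (Suc (b + s))"
    using exists_upcrossing assms(3,4) by blast
  have "y (Suc ((b + s) mod m)) = y (Suc (b + s))"
    using periodic_mod[of y m, OF periodic] by (metis mod_Suc_eq)
  then have "(b + s) mod m \<in> upcrossings y m v"
    using s periodic_mod[of y m "b + s", OF periodic] \<open>0 < m\<close> by (simp add: upcrossings_def)
  with s that show ?thesis by blast
qed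

lemma sum_pos_diff_eq_sum_card_upcrossings:
  fixes y :: "nat \<Rightarrow> int"
  assumes range: "\<And>j. j \<le> m \<Longrightarrow> L \<le> y j \<and> y j \<le> H"
  shows "(\<Sum>j<m. max (y (Suc j) - y j) 0) = (\<Sum>v\<in>{L..<H}. int (card (upcrossings y m v)))"
proof -
  have "max (y (Suc j) - y j) 0 = (\<Sum>v\<in>{L..<H}. of_bool (y j \<le> v \<and> v < y (Suc j)))"
    if "j < m" for j
  proof -
    have "{L..<H} \<inter> {v. y j \<le> v \<and> v < y (Suc j)} = {y j..<y (Suc j)}"
      using range[of j] range[of "Suc j"] that by auto
    then show ?thesis by (simp add: max_def)
  qed
  then have "(\<Sum>j<m. max (y (Suc j) - y j) 0)
      = (\<Sum>j<m. \<Sum>v\<in>{L..<H}. of_bool (y j \<le> v \<and> v < y (Suc j)))"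
    by (intro sum.cong) simp_all
  also have "\<dots> = (\<Sum>v\<in>{L..<H}. \<Sum>j<m. of_bool (y j \<le> v \<and> v < y (Suc j)))"
    by (rule sum.swap)
  also have "\<dots> = (\<Sum>v\<in>{L..<H}. int (card (upcrossings y m v)))"
    unfolding upcrossings_def card_filter_lessThan_eq_sum by simp
  finally show ?thesis .
qed

lemma sum_abs_diff_eq_twice_sum_pos_diff:
  fixes y :: "nat \<Rightarrow> 'a::linordered_idom"
  assumes "y m = y 0"
  shows "(\<Sum>j<m. \<bar>y (Suc j) - y j\<bar>) = 2 * (\<Sum>j<m. max (y (Suc j) - y j) 0)"
proof -
  have "(\<Sum>j<m. \<bar>y (Suc j) - y j\<bar>) = (\<Sum>j<m. 2 * max (y (Suc j) - y j) 0 - (y (Suc j) - y j))"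
    by (intro sum.cong) (simp_all add: abs_if max_def)
  also have "\<dots> = 2 * (\<Sum>j<m. max (y (Suc j) - y j) 0) - (\<Sum>j<m. y (Suc j) - y j)"
    by (simp add: sum_subtractf sum_distrib_left)
  finally show ?thesis using sum_lessThan_telescope[of y m] assms by simp
qed

definition peaks :: "(nat \<Rightarrow> 'a::linorder) \<Rightarrow> nat \<Rightarrow> nat set" where
  "peaks y m = {q. q < m \<and> y q < y (Suc q) \<and> y (Suc (Suc q)) < y (Suc q)}"

lemma periodic_reach_within:
  fixes y :: "nat \<Rightarrow> 'a"
  assumes periodic: "\<And>j. y (j + m) = y j"
    and "q < m" "g < m" "y (Suc q) \<noteq> y g"
  obtains t where "t + 2 \<le> m" "y (Suc (Suc q) + t) = y g"
proof -
  define t where "t = (g + 2 * m - Suc (Suc q)) mod m"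
  have "y (Suc (Suc q) + t) = y ((Suc (Suc q) + t) mod m)"
    by (rule periodic_mod[of y m, OF periodic])
  also have "(Suc (Suc q) + t) mod m = (g + 2 * m) mod m"
  proof -
    have "Suc (Suc q) + (g + 2 * m - Suc (Suc q)) = g + 2 * m" using \<open>q < m\<close> by simp
    then show ?thesis unfolding t_def mod_add_right_eq by (rule arg_cong)
  qed
  also have "\<dots> = g" using \<open>g < m\<close> by simp
  finally have yt: "y (Suc (Suc q) + t) = y g" .
  have "t \<noteq> m - 1"
  proof
    assume "t = m - 1"
    then have "Suc (Suc q) + t = Suc q + m" using \<open>q < m\<close> by simp
    then have "y (Suc q) = y g" using yt periodic[of "Suc q"] by metis
    with \<open>y (Suc q) \<noteq> y g\<close> show False ..
  qed
  moreover have "t < m" using \<open>q < m\<close> by (simp add: t_def)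
  ultimately have "t + 2 \<le> m" by linarith
  with yt that show ?thesis by blast
qed

lemma card_upcrossings_below_peak:
  fixes y :: "nat \<Rightarrow> int"
  assumes periodic: "\<And>j. y (j + m) = y j"
    and q: "q \<in> peaks y m" and g: "g < m" "y (Suc q) < y g"
  shows "2 \<le> card (upcrossings y m (y (Suc q) - 1))"
proof -
  (* The level just below the peak is crossed at q, and again on the way from q + 2, which lies
     below it, to a position above the peak. *)
  define v where "v = y (Suc q) - 1"
  define b where "b = Suc (Suc q)"
  have "q < m" using q by (simp add: peaks_def)
  then have "0 < m" by simp
  obtain t where "t + 2 \<le> m" and yt: "y (b + t) = y g"
    using periodic_reach_within[of y m, OF periodic \<open>q < m\<close> g(1)] g(2) unfolding b_def by auto
  have "y b \<le> v" "v < y (b + t)" using q g(2) yt by (simp_all add: b_def v_def peaks_def)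
  then obtain s where s: "s < t" "(b + s) mod m \<in> upcrossings y m v"
    using periodic_upcrossing[of y m b v t, OF periodic \<open>0 < m\<close>] by blast
  have "q \<in> upcrossings y m v" using q by (simp add: upcrossings_def peaks_def v_def)
  moreover have "(b + s) mod m \<noteq> q"
  proof
    assume "(b + s) mod m = q"
    then have "(b + s) mod m = q mod m" using \<open>q < m\<close> by simp
    then have "m dvd Suc (Suc s)" using mod_eq_dvd_iff_nat[of q "b + s" m] by (simp add: b_def)
    moreover have "Suc (Suc s) < m" using s(1) \<open>t + 2 \<le> m\<close> by simp
    ultimately show False using nat_dvd_not_less by blast
  qed
  ultimately have "{q, (b + s) mod m} \<subseteq> upcrossings y m v" "card {q, (b + s) mod m} = 2"
    using s(2) by auto
  moreover have "finite (upcrossings y m v)" by (simp add: upcrossings_def)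
  ultimately show ?thesis unfolding v_def by (metis card_mono)
qed

lemma card_upcrossings_pos:
  fixes y :: "nat \<Rightarrow> 'a::linorder"
  assumes periodic: "\<And>j. y (j + m) = y j"
    and "a < m" "g < m" "y a \<le> v" "v < y g"
  shows "1 \<le> card (upcrossings y m v)"
proof -
  have "0 < m" "v < y (a + (g + m - a))" using assms(2,5) periodic[of g] by simp_all
  then obtain s where "(a + s) mod m \<in> upcrossings y m v"
    using periodic_upcrossing[of y m a v, OF periodic \<open>0 < m\<close> \<open>y a \<le> v\<close>] by blast
  moreover have "finite (upcrossings y m v)" by (simp add: upcrossings_def)
  ultimately show ?thesis by (auto simp: Suc_le_eq card_gt_0_iff)
qed

lemma inj_on_Suc_periodic:
  assumes periodic: "\<And>j. y (j + m) = y j" and inj: "inj_on y {..<m}"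
  shows "inj_on (\<lambda>q. y (Suc q)) {..<m}"
proof (rule inj_onI)
  fix q q' assume "q \<in> {..<m}" "q' \<in> {..<m}" "y (Suc q) = y (Suc q')"
  moreover have "y (Suc j) = y (Suc j mod m)" for j by (rule periodic_mod[of y m, OF periodic])
  ultimately have "Suc q mod m = Suc q' mod m" using inj by (auto dest: inj_onD)
  with \<open>q \<in> {..<m}\<close> \<open>q' \<in> {..<m}\<close> show "q = q'" by (simp add: mod_Suc split: if_splits)
qed

lemma card_peaks_le:
  fixes y :: "nat \<Rightarrow> 'a::linorder"
  assumes periodic: "\<And>j. y (j + m) = y j" and inj: "inj_on y {..<m}"
    and le_H: "\<And>j. y j \<le> H"
  shows "card (peaks y m) \<le> card {q \<in> peaks y m. y (Suc q) < H} + 1"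
proof -
  let ?top = "{q \<in> {..<m}. y (Suc q) = H}"
  have "card ?top = card ((\<lambda>q. y (Suc q)) ` ?top)"
    by (rule card_image[symmetric], rule inj_on_subset[OF inj_on_Suc_periodic[OF periodic inj]]) auto
  also have "\<dots> \<le> card {H}" by (rule card_mono) auto
  finally have "card ?top \<le> 1" by simp
  moreover have "card (peaks y m) \<le> card ({q \<in> peaks y m. y (Suc q) < H} \<union> ?top)"
    using le_H by (intro card_mono) (auto simp: peaks_def order.order_iff_strict)
  ultimately show ?thesis
    using card_Un_le[of "{q \<in> peaks y m. y (Suc q) < H}" ?top] by linarith
qed

lemma sum_card_upcrossings_ge_peaks:
  fixes y :: "nat \<Rightarrow> int"
  assumes periodic: "\<And>j. y (j + m) = y j" and inj: "inj_on y {..<m}"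
    and range: "\<And>j. L \<le> y j \<and> y j \<le> H"
    and a: "a < m" "y a = L" and g: "g < m" "y g = H"
  shows "(H - L) + int (card (peaks y m)) - 1 \<le> (\<Sum>v\<in>{L..<H}. int (card (upcrossings y m v)))"
proof -
  define Q where "Q = {q \<in> peaks y m. y (Suc q) < H}"
  define levels where "levels = (\<lambda>q. y (Suc q) - 1) ` Q"
  have "card levels = card Q"
    unfolding levels_def
    by (rule card_image, rule inj_on_subset[of "\<lambda>q. y (Suc q) - 1" "{..<m}"])
       (use inj_on_Suc_periodic[OF periodic inj] in \<open>auto simp: inj_on_def Q_def peaks_def\<close>)
  moreover have "levels \<subseteq> {L..<H}"
  proof
    fix v assume "v \<in> levels"
    then obtain q where "q \<in> peaks y m" "y (Suc q) < H" "v = y (Suc q) - 1"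
      by (auto simp: levels_def Q_def)
    with range[of q] show "v \<in> {L..<H}" by (simp add: peaks_def)
  qed
  then have "(\<Sum>v\<in>{L..<H}. 1 + of_bool (v \<in> levels)) = (H - L) + int (card levels)"
    using range[of 0] by (simp add: sum.distrib Int_absorb1 Collect_mem_eq)
  moreover have "(\<Sum>v\<in>{L..<H}. 1 + of_bool (v \<in> levels)) \<le> (\<Sum>v\<in>{L..<H}. int (card (upcrossings y m v)))"
  proof (rule sum_mono)
    fix v assume "v \<in> {L..<H}"
    then have "1 \<le> card (upcrossings y m v)"
      using card_upcrossings_pos[of y m, OF periodic a(1) g(1)] a(2) g(2) by simp
    moreover have "2 \<le> card (upcrossings y m v)" if "v \<in> levels"
      using that card_upcrossings_below_peak[of y m, OF periodic _ g(1)] g(2)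
      by (auto simp: levels_def Q_def)
    ultimately show "1 + of_bool (v \<in> levels) \<le> int (card (upcrossings y m v))" by auto
  qed
  moreover have "card (peaks y m) \<le> card Q + 1"
    unfolding Q_def using card_peaks_le[OF periodic inj] range by blast
  ultimately show ?thesis by linarith
qed

lemma total_variation_ge_peaks:
  fixes y :: "nat \<Rightarrow> int"
  assumes periodic: "\<And>j. y (j + m) = y j" and inj: "inj_on y {..<m}" and "0 < m"
  shows "2 * (int m - 1) + 2 * (int (card (peaks y m)) - 1) \<le> (\<Sum>j<m. \<bar>y (Suc j) - y j\<bar>)"
proof -
  define Y where "Y = y ` {..<m}"
  have Y: "finite Y" "Y \<noteq> {}" using \<open>0 < m\<close> by (auto simp: Y_def)
  have "y j \<in> Y" for j
    using periodic_mod[of y m j, OF periodic] \<open>0 < m\<close> by (simp add: Y_def)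
  with Y have range: "Min Y \<le> y j \<and> y j \<le> Max Y" for j by simp
  obtain a where a: "a < m" "y a = Min Y" using Min_in[OF Y] by (auto simp: Y_def)
  obtain g where g: "g < m" "y g = Max Y" using Max_in[OF Y] by (auto simp: Y_def)
  have "int m - 1 \<le> Max Y - Min Y"
  proof -
    have "m = card Y" using card_image[OF inj] by (simp add: Y_def)
    also have "\<dots> \<le> card {Min Y..Max Y}" using range by (intro card_mono) (auto simp: Y_def)
    also have "\<dots> = nat (Max Y - Min Y + 1)" by simp
    finally show ?thesis using range[of 0] by linarith
  qed
  moreover have "(\<Sum>j<m. \<bar>y (Suc j) - y j\<bar>)
      = 2 * (\<Sum>v\<in>{Min Y..<Max Y}. int (card (upcrossings y m v)))"
    using sum_abs_diff_eq_twice_sum_pos_diff[of y m] periodic[of 0]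
      sum_pos_diff_eq_sum_card_upcrossings[where y = y and m = m and L = "Min Y" and H = "Max Y"] range by simp
  moreover note sum_card_upcrossings_ge_peaks[of y m, OF periodic inj range a g]
  ultimately show ?thesis by simp
qed

lemma total_variation_ge_turns:
  fixes y :: "nat \<Rightarrow> int"
  assumes periodic: "\<And>j. y (j + m) = y j" and inj: "inj_on y {..<m}" and "0 < m"
  shows "2 * int m - 4 + int (card {q. q < m \<and> (y (Suc q) - y q) * (y (Suc (Suc q)) - y (Suc q)) < 0})
    \<le> (\<Sum>j<m. \<bar>y (Suc j) - y j\<bar>)"
proof -
  let ?z = "\<lambda>j. - y j"
  have "{q. q < m \<and> (y (Suc q) - y q) * (y (Suc (Suc q)) - y (Suc q)) < 0} = peaks y m \<union> peaks ?z m"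
    by (auto simp: peaks_def mult_less_0_iff)
  moreover have "card (peaks y m \<union> peaks ?z m) = card (peaks y m) + card (peaks ?z m)"
    by (rule card_Un_disjoint) (auto simp: peaks_def)
  moreover have "2 * (int m - 1) + 2 * (int (card (peaks ?z m)) - 1) \<le> (\<Sum>j<m. \<bar>y (Suc j) - y j\<bar>)"
    using total_variation_ge_peaks[of ?z m] periodic inj \<open>0 < m\<close>
    by (simp add: inj_on_def abs_minus_commute)
  moreover note total_variation_ge_peaks[of y m, OF periodic inj \<open>0 < m\<close>]
  ultimately show ?thesis by simp
qed

(* p i is pi at position i mod mk, and d i = A + 1 - s_i is the slack of the window starting
   there; these are the consequences of msum(pi, k) < 2 used in the argument. *)
locale window_slack =
  fixes p d :: "nat \<Rightarrow> int" and m k :: nat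
  assumes p_periodic: "p (i + m * k) = p i"
    and p_inj: "p a = p b \<Longrightarrow> a mod (m * k) = b mod (m * k)"
    and d_periodic: "d (i + m * k) = d i"
    and d_nonneg: "0 \<le> d i"
    and p_step: "p (i + k) - p i = d i - d (Suc i)"
    and sum_d: "(\<Sum>i<m * k. d i) = int (m * k)"
    and odd_k: "odd k"
    and two_le_m: "2 \<le> m"
begin

lemma k_pos: "0 < k"
  using odd_k by (simp add: odd_pos)

lemma d_not_both_zero: "d i \<noteq> 0 \<or> d (Suc i) \<noteq> 0"
proof (rule ccontr)
  assume "\<not> ?thesis"
  then have "p (i + k) = p i" using p_step[of i] by simp
  then have "(i + k) mod (m * k) = i mod (m * k)" by (rule p_inj)
  then have "m * k dvd k" using mod_eq_dvd_iff_nat[of i "i + k" "m * k"] by simp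
  moreover have "k < m * k" using two_le_m k_pos by simp
  ultimately show False using k_pos nat_dvd_not_less by blast
qed

lemma sum_d_residue_class: "(\<Sum>j<m. d (r + j * k)) = int m"
proof -
  have "(\<Sum>j<m. d (Suc r + j * k)) = (\<Sum>j<m. d (r + j * k))" for r
  proof -
    have "d (r + j * k) - d (Suc r + j * k) = p (r + Suc j * k) - p (r + j * k)" for j
      using p_step[of "r + j * k"] by (simp add: algebra_simps)
    then have "(\<Sum>j<m. d (r + j * k) - d (Suc r + j * k)) = (\<Sum>j<m. p (r + Suc j * k) - p (r + j * k))"
      by simp
    also have "\<dots> = 0"
      using sum_lessThan_telescope[of "\<lambda>j. p (r + j * k)" m] p_periodic[of r] by simp
    finally show ?thesis by (simp add: sum_subtractf)
  qed
  then have class_eq: "(\<Sum>j<m. d (r + j * k)) = (\<Sum>j<m. d (j * k))" for r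
    by (induction r) simp_all
  have "int (m * k) = (\<Sum>j<m. \<Sum>r<k. d (r + j * k))"
    using sum_d sum_lessThan_mult_split[of d m k] by simp
  also have "\<dots> = (\<Sum>r<k. \<Sum>j<m. d (r + j * k))" by (rule sum.swap)
  also have "\<dots> = int k * (\<Sum>j<m. d (j * k))" by (simp add: class_eq)
  finally have "int k * int m = int k * (\<Sum>j<m. d (j * k))" by (simp add: mult.commute)
  with k_pos class_eq[of r] show ?thesis by simp
qed

definition double_slack :: "nat \<Rightarrow> bool" where
  "double_slack q \<longleftrightarrow> 0 < d q \<and> 0 < d (Suc q)"

definition turn :: "nat \<Rightarrow> bool" where
  "turn q \<longleftrightarrow> (p (q + k) - p q) * (p (q + k + k) - p (q + k)) < 0"

lemma card_turn_double_slack_residue_class_le: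
  assumes "r < k"
  shows "card {j. j < m \<and> turn (r + j * k)} + 2 * card {j. j < m \<and> double_slack (r + j * k)} \<le> 4"
proof -
  define y where "y j = p (r + j * k)" for j
  have y_periodic: "y (j + m) = y j" for j
    using p_periodic[of "r + j * k"] by (simp add: y_def algebra_simps)
  have "inj_on y {..<m}"
  proof (rule inj_onI)
    fix a b assume ab: "a \<in> {..<m}" "b \<in> {..<m}" "y a = y b"
    have "r + j * k < m * k" if "j < m" for j
    proof -
      have "r + j * k < Suc j * k" using \<open>r < k\<close> by simp
      also have "\<dots> \<le> m * k" using that by (intro mult_le_mono1) simp
      finally show ?thesis .
    qed
    moreover have "(r + a * k) mod (m * k) = (r + b * k) mod (m * k)"
      using ab(3) unfolding y_def by (rule p_inj)
    ultimately show "a = b" using ab(1,2) k_pos by simp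
  qed
  then have lower: "2 * int m - 4 + int (card {j. j < m \<and> turn (r + j * k)})
      \<le> (\<Sum>j<m. \<bar>y (Suc j) - y j\<bar>)"
    using total_variation_ge_turns[of y m] y_periodic two_le_m
    by (simp add: y_def turn_def algebra_simps)
  have "\<bar>y (Suc j) - y j\<bar> \<le> d (r + j * k) + d (Suc r + j * k) - 2 * of_bool (double_slack (r + j * k))"
    for j
    using p_step[of "r + j * k"] d_nonneg[of "r + j * k"] d_nonneg[of "Suc r + j * k"]
    by (auto simp: y_def double_slack_def algebra_simps)
  then have "(\<Sum>j<m. \<bar>y (Suc j) - y j\<bar>)
      \<le> (\<Sum>j<m. d (r + j * k) + d (Suc r + j * k) - 2 * of_bool (double_slack (r + j * k)))"
    by (rule sum_mono)
  also have "\<dots> = 2 * int m - 2 * int (card {j. j < m \<and> double_slack (r + j * k)})"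
    using sum_d_residue_class[of r] sum_d_residue_class[of "Suc r"]
    by (simp add: sum.distrib sum_subtractf sum_distrib_left[symmetric] card_filter_lessThan_eq_sum)
  finally show ?thesis using lower by linarith
qed

lemma turn_if_no_double_slack:
  assumes no_double: "\<And>t. t \<le> k \<Longrightarrow> \<not> double_slack (q + t)"
  shows "turn q"
proof -
  have flip: "d (Suc (q + t)) = 0 \<longleftrightarrow> d (q + t) \<noteq> 0" if "t \<le> k" for t
    using no_double[OF that] d_not_both_zero[of "q + t"] d_nonneg[of "q + t"] d_nonneg[of "Suc (q + t)"]
    by (auto simp: double_slack_def)
  have alternate: "d (q + t) = 0 \<longleftrightarrow> (d q = 0 \<longleftrightarrow> even t)" if "t \<le> k" for t
    using that by (induction t) (auto simp: flip)
  have "d (q + k) = 0 \<longleftrightarrow> d q \<noteq> 0" using alternate[of k] odd_k by simp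
  moreover have "d (Suc q) = 0 \<longleftrightarrow> d q \<noteq> 0" "d (Suc (q + k)) = 0 \<longleftrightarrow> d (q + k) \<noteq> 0"
    using flip[of 0] flip[of k] by simp_all
  moreover have "turn q \<longleftrightarrow> (d q - d (Suc q)) * (d (q + k) - d (Suc (q + k))) < 0"
    using p_step[of q] p_step[of "q + k"] by (simp add: turn_def)
  ultimately show ?thesis
    using d_nonneg[of q] d_nonneg[of "Suc q"] d_nonneg[of "q + k"] d_nonneg[of "Suc (q + k)"]
    by (cases "d q = 0") (auto simp: mult_less_0_iff)
qed

lemma card_not_turn_le:
  "card {q. q < m * k \<and> \<not> turn q} \<le> (k + 1) * card {q. q < m * k \<and> double_slack q}"
proof -
  have "of_bool (\<not> turn q) \<le> (\<Sum>t<Suc k. of_bool (double_slack (q + t)) :: nat)" for q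
  proof (cases "turn q")
    case False
    then obtain t where "t \<le> k" "double_slack (q + t)" using turn_if_no_double_slack by blast
    then have "of_bool (double_slack (q + t)) \<le> (\<Sum>t<Suc k. of_bool (double_slack (q + t)) :: nat)"
      by (intro member_le_sum) auto
    with \<open>double_slack (q + t)\<close> show ?thesis by simp
  qed simp
  then have "card {q. q < m * k \<and> \<not> turn q} \<le> (\<Sum>q<m * k. \<Sum>t<Suc k. of_bool (double_slack (q + t)))"
    unfolding card_filter_lessThan_eq_sum by (rule sum_mono)
  also have "\<dots> = (\<Sum>t<Suc k. \<Sum>q<m * k. of_bool (double_slack (q + t)))" by (rule sum.swap)
  also have "\<dots> = (\<Sum>t<Suc k. card {q. q < m * k \<and> double_slack q})"
  proof -
    have "double_slack (q + m * k) = double_slack q" for q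
      using d_periodic[of q] d_periodic[of "Suc q"] by (simp add: double_slack_def)
    then have "(\<Sum>q<m * k. of_bool (double_slack (q + t)) :: nat) = (\<Sum>q<m * k. of_bool (double_slack q))"
      for t by (intro sum_shift_periodic) simp
    then show ?thesis unfolding card_filter_lessThan_eq_sum by simp
  qed
  finally show ?thesis by simp
qed

lemma card_turn_double_slack_le:
  "card {q. q < m * k \<and> turn q} + 2 * card {q. q < m * k \<and> double_slack q} \<le> 4 * k"
proof -
  have "card {q. q < m * k \<and> turn q} + 2 * card {q. q < m * k \<and> double_slack q}
      = (\<Sum>r<k. card {j. j < m \<and> turn (r + j * k)} + 2 * card {j. j < m \<and> double_slack (r + j * k)})"
    by (simp add: card_filter_lessThan_mult_split sum.distrib sum_distrib_left)
  also have "\<dots> \<le> (\<Sum>r<k. 4)" using card_turn_double_slack_residue_class_le by (intro sum_mono) simp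
  finally show ?thesis by simp
qed

theorem m_le_2k_plus_2: "m \<le> 2 * k + 2"
proof -
  define T where "T = card {q. q < m * k \<and> turn q}"
  define B where "B = card {q. q < m * k \<and> double_slack q}"
  have "T + card {q. q < m * k \<and> \<not> turn q}
      = card ({q. q < m * k \<and> turn q} \<union> {q. q < m * k \<and> \<not> turn q})"
    unfolding T_def by (rule card_Un_disjoint[symmetric]) auto
  also have "{q. q < m * k \<and> turn q} \<union> {q. q < m * k \<and> \<not> turn q} = {..<m * k}" by auto
  finally have "T + card {q. q < m * k \<and> \<not> turn q} = m * k" by simp
  then have "m * k \<le> T + (k + 1) * B" using card_not_turn_le by (simp add: B_def)
  moreover have "T + 2 * B \<le> 4 * k" using card_turn_double_slack_le by (simp add: T_def B_def)
  moreover have "(k - 1) * B \<le> (k - 1) * (2 * k)" using calculation(2) by simp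
  ultimately have "m * k \<le> (2 * k + 2) * k" using k_pos by (cases k) (simp_all add: algebra_simps)
  then show ?thesis using k_pos by (simp only: mult_le_cancel2)
qed

end

lemma window_sum_mod: "window_sum xs k (i mod length xs) = window_sum xs k i"
  unfolding window_sum_def by (simp add: mod_add_left_eq)

lemma window_sum_Suc:
  "window_sum xs k (Suc i) + xs ! (i mod length xs) = window_sum xs k i + xs ! ((i + k) mod length xs)"
proof -
  have "(\<Sum>j<Suc k. xs ! ((i + j) mod length xs)) = xs ! (i mod length xs) + window_sum xs k (Suc i)"
    unfolding window_sum_def by (subst sum.lessThan_Suc_shift) simp
  moreover have "(\<Sum>j<Suc k. xs ! ((i + j) mod length xs)) = window_sum xs k i + xs ! ((i + k) mod length xs)"
    unfolding window_sum_def by simp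
  ultimately show ?thesis by simp
qed

lemma sum_window_sum: "(\<Sum>i<length xs. window_sum xs k i) = k * sum_list xs"
proof -
  have "(\<Sum>i<length xs. window_sum xs k i) = (\<Sum>j<k. \<Sum>i<length xs. xs ! ((i + j) mod length xs))"
    unfolding window_sum_def by (rule sum.swap)
  also have "\<dots> = (\<Sum>j<k. \<Sum>i<length xs. xs ! (i mod length xs))"
    by (intro sum.cong refl sum_shift_periodic[where f = "\<lambda>i. xs ! (i mod length xs)"]) simp
  also have "(\<Sum>i<length xs. xs ! (i mod length xs)) = sum_list xs"
    by (simp add: sum_list_sum_nth atLeast0LessThan)
  finally show ?thesis by simp
qed

lemma two_sum_list_permutation:
  fixes n :: nat
  assumes "xs \<in> permutations_of_set {1..n}"
  shows "2 * sum_list xs = n * (n + 1)"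
  using sum_list_distinct_conv_sum_set[of xs id] permutations_of_setD[OF assms]
    double_gauss_sum_from_Suc_0[of n, where 'a = nat]
  by simp

lemma exists_large_window:
  fixes xs :: "nat list" and m k :: nat
  assumes xs: "xs \<in> permutations_of_set {1..m * k}" and "odd m" "odd k" "2 * k + 3 \<le> m"
  obtains i where "i < m * k" "k * (m * k + 1) + 4 \<le> 2 * window_sum xs k i"
proof (rule ccontr)
  assume no_large: "\<not> thesis"
  define n where "n = m * k"
  have "0 < n" using assms(3,4) by (simp add: n_def odd_pos)
  have len: "length xs = n" using length_finite_permutations_of_set[OF xs] by (simp add: n_def)
  define A where "A = k * (n + 1) div 2"
  have two_A: "2 * A = k * (n + 1)" using assms(2,3) by (simp add: A_def n_def)
  have small: "window_sum xs k i \<le> A + 1" for i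
  proof -
    have "\<not> k * (n + 1) + 4 \<le> 2 * window_sum xs k (i mod n)"
      using no_large that[of "i mod n"] \<open>0 < n\<close> by (auto simp: n_def)
    then show ?thesis using two_A window_sum_mod[of xs k i] len by simp
  qed
  define p where "p i = int (xs ! (i mod n))" for i
  define d where "d i = int A + 1 - int (window_sum xs k i)" for i
  interpret window_slack p d m k
  proof
    show "p (i + m * k) = p i" for i by (simp add: p_def n_def)
    show "d (i + m * k) = d i" for i
      using window_sum_mod[of xs k i] window_sum_mod[of xs k "i + m * k"] len by (simp add: d_def n_def)
    show "0 \<le> d i" for i using small[of i] by (simp add: d_def)
    show "p (i + k) - p i = d i - d (Suc i)" for i
      using window_sum_Suc[of xs k i] len by (simp add: p_def d_def algebra_simps)
    show "a mod (m * k) = b mod (m * k)" if "p a = p b" for a b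
      using that nth_eq_iff_index_eq[OF permutations_of_setD(2)[OF xs], of "a mod n" "b mod n"] len \<open>0 < n\<close>
      by (simp add: p_def n_def)
    have "2 * (\<Sum>i<n. d i) = 2 * int n * (int A + 1) - int k * (2 * int (sum_list xs))"
      using sum_window_sum[of xs k] len by (simp add: d_def sum_subtractf of_nat_sum[symmetric])
    moreover have "int k * (2 * int (sum_list xs)) = int n * (2 * int A)"
    proof -
      have "k * (2 * sum_list xs) = n * (2 * A)"
        using two_sum_list_permutation[OF xs] two_A by (simp add: n_def algebra_simps)
      then show ?thesis by (metis of_nat_mult of_nat_numeral)
    qed
    ultimately have "2 * (\<Sum>i<n. d i) = 2 * int n" by (simp add: algebra_simps)
    then show "(\<Sum>i<m * k. d i) = int (m * k)" by (simp add: n_def)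
  qed (use assms in simp_all)
  show False using m_le_2k_plus_2 assms(4) by simp
qed

lemma window_sum_le_msum_perm:
  assumes "i < length xs"
  shows "real (window_sum xs k i) - real k * (real (length xs) + 1) / 2 \<le> msum_perm xs k"
  unfolding msum_perm_def using assms by (auto intro: Max_ge)

theorem lemma5p3:
  fixes m k :: nat
  assumes "odd m" and "odd k" and "k \<ge> 3" and "m \<ge> 2 * k + 3"
  shows "msum (m * k) k \<ge> 2"
proof -
  have "2 \<le> msum_perm xs k" if xs: "xs \<in> permutations_of_set {1..m * k}" for xs
  proof -
    obtain i where i: "i < m * k" "k * (m * k + 1) + 4 \<le> 2 * window_sum xs k i"
      using exists_large_window[OF xs assms(1,2,4)] .
    have "length xs = m * k" using length_finite_permutations_of_set[OF xs] by simp
    moreover have "real k * (real (m * k) + 1) + 4 \<le> 2 * real (window_sum xs k i)"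
      using of_nat_mono[OF i(2), where 'a = real] by (simp add: algebra_simps)
    ultimately show ?thesis using window_sum_le_msum_perm[of i xs k] i(1) by simp
  qed
  then show ?thesis
    unfolding msum_def by (subst Min_ge_iff) auto
qed

end
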